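(* Let $\Lambda:\mathrm{Lip}_C^\sigma(\tilde\Omega)\times\tilde\Omega\to\mathbb{R}^{d'}$ be a causal identifiable in-context map. Then (i) for all $(\mu,x,t)\in\mathrm{Lip}_C^\sigma(\tilde\Omega)\times\tilde\Omega$, $\Lambda(\mu,x,t)=\bar\Lambda(\mu_t,x)$; (ii) if moreover $\Lambda$ is continuous (weak$^*$ $\times$ Euclidean), then the map $\mathcal{X}_C^\sigma\ni(\nu,x)\mapsto\bar\Lambda(\nu,x)$ is continuous for the product of the weak$^*$ and Euclidean topologies.
   Context: $\Omega\subset\mathbb{R}^d$ compact, $\tilde\Omega=\Omega\times[0,1]$, $C>0$, $\sigma\in(0,1)$, $\bar\mu$ the time marginal of $\mu$. $\mathrm{Lip}_C^\sigma(\tilde\Omega)$: all $\mu\in\mathcal{P}(\tilde\Omega)$ with $\bar\mu(\{0\})\ge\sigma$ admitting a disintegration $d\mu(x,s)=d\mu(x|s)d\bar\mu(s)$ with $W_2(\mu(\cdot|s),\mu(\cdot|t))\le C|s-t|$ for all $s,t$. Masked measure: $\mu_t=\frac{1_{[0,t]}}{\bar\mu([0,t])}\cdot\mu$, $t\in[0,1]$. Causal: $\Lambda(\mu,x,t)=\Lambda(\mu_t,x,t)$. Identifiable: $\mu_t=\mu_{t'}$ implies $\Lambda(\mu_t,\cdot,t)=\Lambda(\mu_{t'},\cdot,t')$. Reduced map: $\bar\Lambda(\mu,x)=\Lambda(\mu,x,e(\bar\mu))$ where $e(\bar\mu)=\max\operatorname{supp}(\bar\mu)$. $\mathcal{X}_C^\sigma=\{(\mu_t,x):\mu\in\mathrm{Lip}_C^\sigma(\tilde\Omega),x\in\Omega,t\in[0,1]\}$.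 *)

theory Defs
  imports "HOL-Probability.Probability"
begin

text \<open>Probability measures on the Borel sets of 'a \<times> real concentrated on
  \<Omega> \<times> [0,1], i.e. elements of P(\<Omega>~).\<close>
definition Pm :: "'a::euclidean_space set \<Rightarrow> ('a \<times> real) measure set" where
  "Pm \<Omega> = {\<mu>. prob_space \<mu> \<and> sets \<mu> = sets borel \<and> emeasure \<mu> (\<Omega> \<times> {0..1}) = 1}"

definition tmarg :: "('a::euclidean_space \<times> real) measure \<Rightarrow> real measure" where
  "tmarg \<mu> = distr \<mu> borel snd"

definition couplings :: "'a::euclidean_space measure \<Rightarrow> 'a measure \<Rightarrow> ('a \<times> 'a) measure set" where
  "couplings \<alpha> \<beta> = {\<pi>. prob_space \<pi> \<and> sets \<pi> = sets borel \<and>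
      distr \<pi> borel fst = \<alpha> \<and> distr \<pi> borel snd = \<beta>}"

definition W2 :: "'a::euclidean_space measure \<Rightarrow> 'a measure \<Rightarrow> real" where
  "W2 \<alpha> \<beta> = sqrt (enn2real (INF \<pi>\<in>couplings \<alpha> \<beta>.
       \<integral>\<^sup>+ z. ennreal ((norm (fst z - snd z))\<^sup>2) \<partial>\<pi>))"

definition Lip :: "real \<Rightarrow> real \<Rightarrow> 'a::euclidean_space set \<Rightarrow> ('a \<times> real) measure set" where
  "Lip C \<sigma> \<Omega> = {\<mu> \<in> Pm \<Omega>. measure (tmarg \<mu>) {0} \<ge> \<sigma> \<and>
     (\<exists>K :: real \<Rightarrow> 'a measure.
        K \<in> measurable borel (subprob_algebra borel) \<and>
        (\<forall>s. prob_space (K s) \<and> sets (K s) = sets borel \<and> emeasure (K s) \<Omega> = 1) \<and>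
        (\<forall>A \<in> sets (borel :: ('a \<times> real) measure).
           emeasure \<mu> A = (\<integral>\<^sup>+ s. emeasure (K s) {x. (x, s) \<in> A} \<partial>tmarg \<mu>)) \<and>
        (\<forall>s\<in>{0..1}. \<forall>t\<in>{0..1}. W2 (K s) (K t) \<le> C * \<bar>s - t\<bar>))}"

definition mask :: "('a::euclidean_space \<times> real) measure \<Rightarrow> real \<Rightarrow> ('a \<times> real) measure" where
  "mask \<mu> t = density \<mu> (\<lambda>z. indicator (UNIV \<times> {0..t}) z / emeasure \<mu> (UNIV \<times> {0..t}))"

definition msupp :: "real measure \<Rightarrow> real set" where
  "msupp \<nu> = {s. \<forall>\<epsilon>>0. emeasure \<nu> (ball s \<epsilon>) > 0}"

definition e_end :: "real measure \<Rightarrow> real" where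
  "e_end \<nu> = Sup (msupp \<nu>)"

definition causal :: "real \<Rightarrow> real \<Rightarrow> 'a::euclidean_space set \<Rightarrow>
    (('a \<times> real) measure \<Rightarrow> 'a \<Rightarrow> real \<Rightarrow> 'b) \<Rightarrow> bool" where
  "causal C \<sigma> \<Omega> \<Lambda> \<longleftrightarrow> (\<forall>\<mu>\<in>Lip C \<sigma> \<Omega>. \<forall>x\<in>\<Omega>. \<forall>t\<in>{0..1}. \<Lambda> \<mu> x t = \<Lambda> (mask \<mu> t) x t)"

definition identifiable :: "real \<Rightarrow> real \<Rightarrow> 'a::euclidean_space set \<Rightarrow>
    (('a \<times> real) measure \<Rightarrow> 'a \<Rightarrow> real \<Rightarrow> 'b) \<Rightarrow> bool" where
  "identifiable C \<sigma> \<Omega> \<Lambda> \<longleftrightarrow> (\<forall>\<mu>\<in>Lip C \<sigma> \<Omega>. \<forall>t\<in>{0..1}. \<forall>t'\<in>{0..1}.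
     mask \<mu> t = mask \<mu> t' \<longrightarrow> (\<forall>x\<in>\<Omega>. \<Lambda> (mask \<mu> t) x t = \<Lambda> (mask \<mu> t') x t'))"

definition reduced :: "(('a::euclidean_space \<times> real) measure \<Rightarrow> 'a \<Rightarrow> real \<Rightarrow> 'b) \<Rightarrow>
    ('a \<times> real) measure \<Rightarrow> 'a \<Rightarrow> 'b" where
  "reduced \<Lambda> \<nu> x = \<Lambda> \<nu> x (e_end (tmarg \<nu>))"

text \<open>Weak-star (narrow) topology on P(\<Omega>~): initial topology of the maps
  \<mu> \<mapsto> \<integral> f d\<mu>, f bounded continuous.\<close>
definition weak_star :: "'a::euclidean_space set \<Rightarrow> ('a \<times> real) measure topology" where
  "weak_star \<Omega> = pullback_topology (Pm \<Omega>)
     (\<lambda>\<mu> f. if continuous_on UNIV f \<and> bounded (range f) then integral\<^sup>L \<mu> f else 0)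
     (product_topology (\<lambda>_. euclideanreal) UNIV)"

definition Xset :: "real \<Rightarrow> real \<Rightarrow> 'a::euclidean_space set \<Rightarrow> (('a \<times> real) measure \<times> 'a) set" where
  "Xset C \<sigma> \<Omega> = {(mask \<mu> t, x) | \<mu> x t. \<mu> \<in> Lip C \<sigma> \<Omega> \<and> x \<in> \<Omega> \<and> t \<in> {0..1}}"

end

theory Submission
  imports Defs
begin

text \<open>By causality \<open>\<Lambda>(\<mu>, x, t) = \<Lambda>(\<mu>\<^sub>t, x, t)\<close>. The end \<open>e\<close> of the support of the time
  marginal of \<open>\<mu>\<^sub>t\<close> lies in \<open>[0, t]\<close> (the atom at time 0 keeps the support nonempty),
  and \<open>\<mu>\<close> puts no mass on \<open>\<Omega> \<times> (e, t]\<close>, so \<open>\<mu>\<^sub>e = \<mu>\<^sub>t\<close>. Identifiability then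
  replaces \<open>t\<close> by \<open>e\<close>, which depends on \<open>\<mu>\<^sub>t\<close> only. For continuity, a masked measure
  \<open>\<nu>\<close> is again in \<open>Lip\<^sub>C\<^sup>\<sigma>\<close> and satisfies \<open>\<nu>\<^sub>1 = \<nu>\<close>, so the reduced map is the
  restriction of \<open>(\<nu>, x) \<mapsto> \<Lambda>(\<nu>, x, 1)\<close>.\<close>

lemma measurable_snd_borel:
  "sets M = sets borel \<Longrightarrow> snd \<in> borel_measurable (M :: ('a::topological_space \<times> 'b::topological_space) measure)"
  by (simp cong: measurable_cong_sets) (intro borel_measurable_continuous_onI continuous_intros)

lemma UNIV_Times_in_sets:
  fixes M :: "('a::topological_space \<times> 'b::topological_space) measure"
  assumes "sets M = sets borel" and "B \<in> sets borel"
  shows "UNIV \<times> B \<in> sets M"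
proof -
  have "snd -` B \<inter> space M = UNIV \<times> B"
    using sets_eq_imp_space_eq[OF assms(1)] by auto
  then show ?thesis using measurable_sets[OF measurable_snd_borel[OF assms(1)] assms(2)] by simp
qed

lemma sets_tmarg [measurable_cong, simp]: "sets (tmarg \<mu>) = sets borel"
  by (simp add: tmarg_def)

lemma sets_mask [simp]: "sets (mask \<mu> t) = sets \<mu>"
  by (simp add: mask_def)

lemma emeasure_tmarg:
  assumes "sets \<mu> = sets borel" and "B \<in> sets borel"
  shows "emeasure (tmarg \<mu>) B = emeasure \<mu> (UNIV \<times> B)"
proof -
  have "snd -` B \<inter> space \<mu> = UNIV \<times> B"
    using sets_eq_imp_space_eq[OF assms(1)] by auto
  then show ?thesis
    unfolding tmarg_def by (simp add: emeasure_distr[OF measurable_snd_borel[OF assms(1)] assms(2)])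
qed

lemma emeasure_mask:
  assumes "sets \<mu> = sets borel" and "A \<in> sets borel"
  shows "emeasure (mask \<mu> t) A = emeasure \<mu> (A \<inter> UNIV \<times> {0..t}) / emeasure \<mu> (UNIV \<times> {0..t})"
proof -
  have S: "UNIV \<times> {0..t} \<in> sets \<mu>" by (rule UNIV_Times_in_sets[OF assms(1)]) simp
  have A: "A \<in> sets \<mu>" using assms by simp
  have "emeasure (mask \<mu> t) A = (\<integral>\<^sup>+ z. indicator (A \<inter> UNIV \<times> {0..t}) z * inverse (emeasure \<mu> (UNIV \<times> {0..t})) \<partial>\<mu>)"
    unfolding mask_def using S A
    by (subst emeasure_density) (auto intro!: nn_integral_cong simp: divide_ennreal_def indicator_def)
  also have "\<dots> = emeasure \<mu> (A \<inter> UNIV \<times> {0..t}) / emeasure \<mu> (UNIV \<times> {0..t})"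
    using S A by (simp add: nn_integral_multc divide_ennreal_def)
  finally show ?thesis .
qed

lemma tmarg_mask:
  assumes "sets \<mu> = sets borel"
  shows "tmarg (mask \<mu> t) = density (tmarg \<mu>) (\<lambda>s. indicator {0..t} s / emeasure \<mu> (UNIV \<times> {0..t}))"
proof -
  have ind: "indicator (UNIV \<times> {0..t}) = (\<lambda>z. indicator {0..t} (snd z) :: ennreal)"
    by (auto simp: indicator_def)
  show ?thesis
    unfolding tmarg_def mask_def ind
    by (subst density_distr[OF _ measurable_snd_borel[OF assms]]) simp_all
qed

lemma emeasure_tmarg_mask:
  assumes "sets \<mu> = sets borel" and "B \<in> sets borel"
  shows "emeasure (tmarg (mask \<mu> t)) B = emeasure \<mu> (UNIV \<times> (B \<inter> {0..t})) / emeasure \<mu> (UNIV \<times> {0..t})"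
proof -
  have "emeasure (tmarg (mask \<mu> t)) B = emeasure (mask \<mu> t) (UNIV \<times> B)"
    using assms by (simp add: emeasure_tmarg)
  also have "\<dots> = emeasure \<mu> (UNIV \<times> B \<inter> UNIV \<times> {0..t}) / emeasure \<mu> (UNIV \<times> {0..t})"
    using assms UNIV_Times_in_sets[OF assms] by (simp add: emeasure_mask)
  also have "UNIV \<times> B \<inter> UNIV \<times> {0..t} = UNIV \<times> (B \<inter> {0..t})" by auto
  finally show ?thesis .
qed

lemma mask_eq_if_null_gap:
  assumes "sets \<mu> = sets borel" and "s \<le> t" and "emeasure \<mu> (UNIV \<times> {s<..t}) = 0"
  shows "mask \<mu> s = mask \<mu> t"
proof (rule measure_eqI)
  have null: "UNIV \<times> {s<..t} \<in> null_sets \<mu>"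
    using assms UNIV_Times_in_sets[OF assms(1)] by (auto intro: null_setsI)
  have eq: "emeasure \<mu> (A \<inter> UNIV \<times> {0..s}) = emeasure \<mu> (A \<inter> UNIV \<times> {0..t})"
    if "A \<in> sets \<mu>" for A
  proof (rule emeasure_eq_AE)
    show "AE z in \<mu>. z \<in> A \<inter> UNIV \<times> {0..s} \<longleftrightarrow> z \<in> A \<inter> UNIV \<times> {0..t}"
      by (rule AE_I'[OF null]) (use assms(2) in auto)
  qed (use that UNIV_Times_in_sets[OF assms(1)] in auto)
  fix A assume "A \<in> sets (mask \<mu> s)"
  then show "emeasure (mask \<mu> s) A = emeasure (mask \<mu> t) A"
    using eq[of A] eq[of UNIV] assms(1) by (simp add: emeasure_mask)
qed simp

lemma null_sets_compl_msupp:
  assumes "sets \<nu> = sets borel"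
  shows "UNIV - msupp \<nu> \<in> null_sets \<nu>"
proof -
  define F where "F = {ball s e | s e. e > 0 \<and> emeasure \<nu> (ball s e) = 0}"
  obtain F' where F': "F' \<subseteq> F" "countable F'" "\<Union>F' = \<Union>F"
    using Lindelof[of F] by (auto simp: F_def)
  have "UNIV - msupp \<nu> = \<Union>F"
  proof (intro equalityI subsetI)
    fix s assume "s \<in> UNIV - msupp \<nu>"
    then obtain e where "e > 0" "emeasure \<nu> (ball s e) = 0"
      by (auto simp: msupp_def)
    then show "s \<in> \<Union>F" unfolding F_def by (auto intro!: exI[of _ "ball s e"])
  next
    fix s assume "s \<in> \<Union>F"
    then obtain s0 e where s: "s \<in> ball s0 e" and null: "emeasure \<nu> (ball s0 e) = 0"
      by (auto simp: F_def)
    obtain d where "d > 0" "ball s d \<subseteq> ball s0 e"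
      using openE[OF open_ball s] .
    then have "emeasure \<nu> (ball s d) = 0"
      using emeasure_mono[of "ball s d" "ball s0 e" \<nu>] null assms by simp
    then show "s \<in> UNIV - msupp \<nu>" using \<open>d > 0\<close> by (auto simp: msupp_def)
  qed
  moreover have "(\<Union>B\<in>F'. B) \<in> null_sets \<nu>"
    using F' assms by (intro null_sets_UN') (auto simp: F_def null_sets_def)
  ultimately show ?thesis using F' by simp
qed

lemma e_end_bounds:
  fixes \<nu> :: "real measure"
  assumes sets: "sets \<nu> = sets borel" and a: "0 < emeasure \<nu> {a}" and b: "emeasure \<nu> {b<..} = 0"
  shows "a \<le> e_end \<nu>" "e_end \<nu> \<le> b" "emeasure \<nu> {e_end \<nu><..} = 0"
proof -
  have a_in: "a \<in> msupp \<nu>"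
  proof (unfold msupp_def, intro CollectI allI impI)
    fix e :: real assume "e > 0"
    then have "emeasure \<nu> {a} \<le> emeasure \<nu> (ball a e)"
      using sets by (intro emeasure_mono) auto
    then show "0 < emeasure \<nu> (ball a e)" using a by simp
  qed
  have below_b: "msupp \<nu> \<subseteq> {..b}"
  proof
    fix s assume s: "s \<in> msupp \<nu>"
    show "s \<in> {..b}"
    proof (rule ccontr)
      assume "s \<notin> {..b}"
      then have "ball s (s - b) \<subseteq> {b<..}" by (auto simp: dist_real_def)
      then have null: "emeasure \<nu> (ball s (s - b)) = 0"
        using emeasure_mono[of "ball s (s - b)" "{b<..}" \<nu>] b sets by simp
      moreover have "s - b > 0" using \<open>s \<notin> {..b}\<close> by simp
      ultimately have "0 < emeasure \<nu> (ball s (s - b))" using s unfolding msupp_def by blast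
      with null show False by simp
    qed
  qed
  then have bdd: "bdd_above (msupp \<nu>)" by (auto simp: bdd_above_def)
  show "a \<le> e_end \<nu>" unfolding e_end_def using a_in bdd by (rule cSup_upper)
  show "e_end \<nu> \<le> b" unfolding e_end_def using a_in below_b by (intro cSup_least) auto
  have "{e_end \<nu><..} \<subseteq> UNIV - msupp \<nu>"
    using bdd by (auto simp: e_end_def dest: cSup_upper)
  then have "{e_end \<nu><..} \<in> null_sets \<nu>"
    using null_sets_compl_msupp[OF sets] sets by (auto intro: null_sets_subset)
  then show "emeasure \<nu> {e_end \<nu><..} = 0" by auto
qed

lemma mask_e_end_tmarg_mask:
  assumes "finite_measure \<mu>" and sets: "sets \<mu> = sets borel" and "0 \<le> t"
    and zero: "0 < emeasure \<mu> (UNIV \<times> {0})"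
  defines "t' \<equiv> e_end (tmarg (mask \<mu> t))"
  shows "0 \<le> t'" "t' \<le> t" "mask \<mu> t' = mask \<mu> t"
proof -
  define c where "c = emeasure \<mu> (UNIV \<times> {0..t})"
  have c_fin: "c \<noteq> \<top>"
    using finite_measure.emeasure_finite[OF assms(1)] by (simp add: c_def)
  have E: "emeasure (tmarg (mask \<mu> t)) B = emeasure \<mu> (UNIV \<times> (B \<inter> {0..t})) / c"
    if "B \<in> sets borel" for B
    using emeasure_tmarg_mask[OF sets that] by (simp add: c_def)
  have "{t<..} \<inter> {0..t} = {}" by auto
  have "0 < emeasure (tmarg (mask \<mu> t)) {0}"
    using E[of "{0}"] zero c_fin \<open>0 \<le> t\<close> by (simp add: zero_less_iff_neq_zero)
  moreover have "emeasure (tmarg (mask \<mu> t)) {t<..} = 0"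
    using E[of "{t<..}"] \<open>{t<..} \<inter> {0..t} = {}\<close> by simp
  ultimately have bounds: "0 \<le> t'" "t' \<le> t" and "emeasure (tmarg (mask \<mu> t)) {t'<..} = 0"
    using e_end_bounds[of "tmarg (mask \<mu> t)" 0 t] unfolding t'_def by simp_all
  moreover have "{t'<..} \<inter> {0..t} = {t'<..t}" using bounds by auto
  ultimately have "emeasure \<mu> (UNIV \<times> {t'<..t}) = 0" using E[of "{t'<..}"] c_fin by simp
  with bounds show "0 \<le> t'" "t' \<le> t" "mask \<mu> t' = mask \<mu> t"
    using mask_eq_if_null_gap[OF sets] by simp_all
qed

lemma (in prob_space) emeasure_Int_full:
  assumes "emeasure M S = 1" and "A \<in> sets M"
  shows "emeasure M (A \<inter> S) = emeasure M A"
proof (rule emeasure_eq_AE)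
  have "S \<in> sets M" using assms(1) emeasure_notin_sets by fastforce
  then have "AE x in M. x \<in> S" using assms(1) by (simp add: AE_in_set_eq_1 measure_def)
  then show "AE x in M. x \<in> A \<inter> S \<longleftrightarrow> x \<in> A" by auto
  show "A \<inter> S \<in> sets M" using \<open>S \<in> sets M\<close> assms(2) by auto
qed (use assms in auto)

lemma mask_in_Pm:
  assumes "\<mu> \<in> Pm \<Omega>" and pos: "0 < emeasure \<mu> (UNIV \<times> {0..t})"
  shows "mask \<mu> t \<in> Pm \<Omega>"
proof -
  interpret prob_space \<mu> using assms(1) by (simp add: Pm_def)
  have sets: "sets \<mu> = sets borel" and full: "emeasure \<mu> (\<Omega> \<times> {0..1}) = 1"
    using assms(1) by (auto simp: Pm_def)
  have S: "UNIV \<times> {0..t} \<in> sets \<mu>" using UNIV_Times_in_sets[OF sets] by simp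
  have c: "emeasure \<mu> (UNIV \<times> {0..t}) / emeasure \<mu> (UNIV \<times> {0..t}) = 1"
    using pos by (simp add: less_top[symmetric])
  have "space (mask \<mu> t) = UNIV"
    using sets_eq_imp_space_eq[of "mask \<mu> t" \<mu>] sets_eq_imp_space_eq[OF sets] by simp
  then have "emeasure (mask \<mu> t) (space (mask \<mu> t)) = 1"
    using c by (simp add: emeasure_mask sets)
  moreover have "emeasure (mask \<mu> t) (\<Omega> \<times> {0..1}) = 1"
  proof -
    have "\<Omega> \<times> {0..1} \<in> sets \<mu>"
    proof (rule ccontr)
      assume "\<Omega> \<times> {0..1} \<notin> sets \<mu>"
      then show False using full by (simp add: emeasure_notin_sets)
    qed
    moreover have "emeasure \<mu> (\<Omega> \<times> {0..1} \<inter> UNIV \<times> {0..t}) = emeasure \<mu> (UNIV \<times> {0..t})"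
      using emeasure_Int_full[OF full S] by (simp add: Int_commute)
    ultimately show ?thesis using c sets by (simp add: emeasure_mask)
  qed
  ultimately show ?thesis using sets by (simp add: Pm_def prob_spaceI)
qed

lemma mask_one:
  assumes "\<mu> \<in> Pm \<Omega>"
  shows "mask \<mu> 1 = \<mu>"
proof (rule measure_eqI)
  interpret prob_space \<mu> using assms by (simp add: Pm_def)
  have sets: "sets \<mu> = sets borel" and full: "emeasure \<mu> (\<Omega> \<times> {0..1}) = 1"
    using assms by (auto simp: Pm_def)
  have S: "UNIV \<times> {0..1::real} \<in> sets \<mu>" using UNIV_Times_in_sets[OF sets] by simp
  have "emeasure \<mu> (\<Omega> \<times> {0..1}) \<le> emeasure \<mu> (UNIV \<times> {0..1})"
    using S by (intro emeasure_mono) auto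
  then have S1: "emeasure \<mu> (UNIV \<times> {0..1::real}) = 1"
    using full by (metis antisym emeasure_le_1)
  fix A assume "A \<in> sets (mask \<mu> 1)"
  then show "emeasure (mask \<mu> 1) A = emeasure \<mu> A"
    using emeasure_Int_full[OF S1] sets S1 by (simp add: emeasure_mask divide_ennreal_def)
qed simp

lemma measure_tmarg:
  assumes "sets \<mu> = sets borel" and "B \<in> sets borel"
  shows "measure (tmarg \<mu>) B = measure \<mu> (UNIV \<times> B)"
  using emeasure_tmarg[OF assms] by (simp add: measure_def)

lemma measure_tmarg_mask:
  assumes "finite_measure \<mu>" and sets: "sets \<mu> = sets borel" and "B \<in> sets borel"
  shows "measure (tmarg (mask \<mu> t)) B
    = measure \<mu> (UNIV \<times> (B \<inter> {0..t})) / measure \<mu> (UNIV \<times> {0..t})"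
proof -
  interpret finite_measure \<mu> by fact
  define a where "a = measure \<mu> (UNIV \<times> (B \<inter> {0..t}))"
  define c where "c = measure \<mu> (UNIV \<times> {0..t})"
  have E: "emeasure (tmarg (mask \<mu> t)) B = ennreal a / ennreal c"
    using emeasure_tmarg_mask[OF sets assms(3), of t] by (simp add: emeasure_eq_measure a_def c_def)
  have "0 \<le> a" "a \<le> c"
    using UNIV_Times_in_sets[OF sets] by (auto simp: a_def c_def intro!: finite_measure_mono)
  then consider "a = 0" "c = 0" | "0 < c" by fastforce
  then show ?thesis
  proof cases
    case 1
    then show ?thesis using E by (simp add: measure_def a_def c_def)
  next
    case 2
    then show ?thesis using E \<open>0 \<le> a\<close> by (simp add: measure_def divide_ennreal a_def c_def)
  qed
qed

lemma measure_tmarg_mask_zero_ge: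
  assumes "prob_space \<mu>" and sets: "sets \<mu> = sets borel" and "0 \<le> t"
  shows "measure (tmarg \<mu>) {0} \<le> measure (tmarg (mask \<mu> t)) {0}"
proof -
  interpret prob_space \<mu> by fact
  define a where "a = measure \<mu> (UNIV \<times> {0})"
  define c where "c = measure \<mu> (UNIV \<times> {0..t})"
  have "a \<le> c" unfolding a_def c_def using \<open>0 \<le> t\<close> UNIV_Times_in_sets[OF sets]
    by (intro finite_measure_mono) auto
  moreover have "c \<le> 1" by (simp add: c_def)
  moreover have "measure (tmarg (mask \<mu> t)) {0} = a / c"
    using measure_tmarg_mask[OF finite_measure_axioms sets, of "{0}" t] \<open>0 \<le> t\<close>
    by (simp add: a_def c_def)
  moreover have "0 \<le> a" by (simp add: a_def)
  ultimately show ?thesis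
    using measure_tmarg[OF sets, of "{0}"]
    by (cases "a = 0") (auto simp: a_def[symmetric] le_divide_eq mult_left_le)
qed

lemma measurable_emeasure_section:
  fixes K :: "real \<Rightarrow> 'a::euclidean_space measure"
  assumes K: "K \<in> measurable borel (subprob_algebra borel)"
    and A: "A \<in> sets (borel :: ('a \<times> real) measure)"
  shows "(\<lambda>s. emeasure (K s) {x. (x, s) \<in> A}) \<in> borel_measurable borel"
proof (rule emeasure_measurable_subprob_algebra2[OF _ K])
  have "(\<lambda>(s, x). (x, s)) \<in> borel_measurable (borel :: (real \<times> 'a) measure)"
    by (simp add: case_prod_unfold) (intro borel_measurable_continuous_onI continuous_intros)
  moreover have "(SIGMA s:space borel. {x. (x, s) \<in> A}) = (\<lambda>(s, x). (x, s)) -` A \<inter> space borel"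
    by auto
  ultimately show "(SIGMA s:space borel. {x. (x, s) \<in> A}) \<in> sets (borel \<Otimes>\<^sub>M borel)"
    unfolding borel_prod using A by (metis measurable_sets)
qed

lemma emeasure_mask_disintegration:
  fixes \<mu> :: "('a::euclidean_space \<times> real) measure"
  assumes sets: "sets \<mu> = sets borel" and K: "K \<in> measurable borel (subprob_algebra borel)"
    and disint: "\<And>A. A \<in> sets borel \<Longrightarrow>
        emeasure \<mu> A = (\<integral>\<^sup>+ s. emeasure (K s) {x. (x, s) \<in> A} \<partial>tmarg \<mu>)"
    and A: "A \<in> sets borel"
  shows "emeasure (mask \<mu> t) A = (\<integral>\<^sup>+ s. emeasure (K s) {x. (x, s) \<in> A} \<partial>tmarg (mask \<mu> t))"
proof -
  define c where "c = emeasure \<mu> (UNIV \<times> {0..t})"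
  define At where "At = A \<inter> UNIV \<times> {0..t}"
  have At: "At \<in> sets borel"
    using A UNIV_Times_in_sets[OF sets, of "{0..t}"] sets by (auto simp: At_def)
  have meas: "(\<lambda>s. emeasure (K s) {x. (x, s) \<in> B}) \<in> borel_measurable (tmarg \<mu>)"
    if "B \<in> sets borel" for B
    using measurable_emeasure_section[OF K that] by simp
  have "(\<integral>\<^sup>+ s. emeasure (K s) {x. (x, s) \<in> A} \<partial>tmarg (mask \<mu> t))
      = (\<integral>\<^sup>+ s. indicator {0..t} s / c * emeasure (K s) {x. (x, s) \<in> A} \<partial>tmarg \<mu>)"
    unfolding tmarg_mask[OF sets] c_def by (rule nn_integral_density) (simp_all add: meas[OF A])
  also have "\<dots> = (\<integral>\<^sup>+ s. emeasure (K s) {x. (x, s) \<in> At} * inverse c \<partial>tmarg \<mu>)"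
    by (intro nn_integral_cong) (auto simp: At_def indicator_def divide_ennreal_def mult.commute)
  also have "\<dots> = emeasure \<mu> At / c"
    using meas[OF At] disint[OF At] by (simp add: nn_integral_multc divide_ennreal_def)
  also have "\<dots> = emeasure (mask \<mu> t) A"
    using emeasure_mask[OF sets A] by (simp add: At_def c_def)
  finally show ?thesis ..
qed

lemma LipD:
  assumes "\<mu> \<in> Lip C \<sigma> \<Omega>"
  shows "\<mu> \<in> Pm \<Omega>" "prob_space \<mu>" "sets \<mu> = sets borel" "\<sigma> \<le> measure (tmarg \<mu>) {0}"
  using assms by (simp_all add: Lip_def Pm_def)

lemma Lip_zero_slice_pos:
  assumes "\<mu> \<in> Lip C \<sigma> \<Omega>" and "0 < \<sigma>"
  shows "0 < emeasure \<mu> (UNIV \<times> {0})"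
proof -
  have "sets \<mu> = sets borel" and "0 < measure (tmarg \<mu>) {0}"
    using LipD[OF assms(1)] assms(2) by auto
  then show ?thesis by (auto simp: measure_def emeasure_tmarg zero_less_iff_neq_zero)
qed

lemma mask_in_Lip:
  assumes L: "\<mu> \<in> Lip C \<sigma> \<Omega>" and "0 < \<sigma>" and "0 \<le> t"
  shows "mask \<mu> t \<in> Lip C \<sigma> \<Omega>"
proof -
  note Pm = LipD(1)[OF L] and P = LipD(2)[OF L] and sets = LipD(3)[OF L]
  have "emeasure \<mu> (UNIV \<times> {0}) \<le> emeasure \<mu> (UNIV \<times> {0..t})"
    using \<open>0 \<le> t\<close> UNIV_Times_in_sets[OF sets] by (intro emeasure_mono) auto
  then have "mask \<mu> t \<in> Pm \<Omega>"
    using mask_in_Pm[OF Pm] Lip_zero_slice_pos[OF L \<open>0 < \<sigma>\<close>] by simp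
  moreover have "\<sigma> \<le> measure (tmarg (mask \<mu> t)) {0}"
    using measure_tmarg_mask_zero_ge[OF P sets \<open>0 \<le> t\<close>] LipD(4)[OF L] by linarith
  moreover obtain K :: "real \<Rightarrow> 'a measure" where
    K: "K \<in> measurable borel (subprob_algebra borel)"
      "\<forall>s. prob_space (K s) \<and> sets (K s) = sets borel \<and> emeasure (K s) \<Omega> = 1"
      "\<forall>A \<in> sets borel. emeasure \<mu> A = (\<integral>\<^sup>+ s. emeasure (K s) {x. (x, s) \<in> A} \<partial>tmarg \<mu>)"
      "\<forall>s\<in>{0..1}. \<forall>t\<in>{0..1}. W2 (K s) (K t) \<le> C * \<bar>s - t\<bar>"
    using L unfolding Lip_def mem_Collect_eq by (elim conjE exE) blast
  moreover have "\<forall>A \<in> sets borel.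
      emeasure (mask \<mu> t) A = (\<integral>\<^sup>+ s. emeasure (K s) {x. (x, s) \<in> A} \<partial>tmarg (mask \<mu> t))"
    by (intro ballI emeasure_mask_disintegration[OF sets K(1)]) (use K(3) in auto)
  ultimately show ?thesis unfolding Lip_def mem_Collect_eq by (intro conjI exI[of _ K])
qed

lemma Xset_subset_Lip:
  assumes "0 < \<sigma>"
  shows "Xset C \<sigma> \<Omega> \<subseteq> Lip C \<sigma> \<Omega> \<times> \<Omega>"
  using mask_in_Lip[OF _ assms] by (auto simp: Xset_def)

lemma continuous_map_fix_last:
  fixes f :: "'a \<times> ('b::topological_space \<times> 'c::topological_space) \<Rightarrow> 'd"
  assumes f: "continuous_map (subtopology (prod_topology X euclidean) (A \<times> (B \<times> C))) Y f"
    and "c \<in> C" and "S \<subseteq> A \<times> B"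
  shows "continuous_map (subtopology (prod_topology X euclidean) S) Y (\<lambda>(u, y). f (u, (y, c)))"
proof -
  have "continuous_map (prod_topology X euclidean) (prod_topology euclidean euclidean)
      (\<lambda>p::'a \<times> 'b. (snd p, c))"
    by (intro continuous_map_pairedI continuous_map_snd) simp
  then have "continuous_map (subtopology (prod_topology X euclidean) S)
      (prod_topology X euclidean) (\<lambda>(u, y). (u, (y, c)))"
    by (auto simp: case_prod_unfold intro!: continuous_map_pairedI continuous_map_fst
        intro: continuous_map_from_subtopology)
  then have "continuous_map (subtopology (prod_topology X euclidean) S)
      (subtopology (prod_topology X euclidean) (A \<times> (B \<times> C))) (\<lambda>(u, y). (u, (y, c)))"
    using assms(2,3) by (auto simp: continuous_map_in_subtopology)
  from continuous_map_compose[OF this f] show ?thesis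
    by (simp add: o_def case_prod_unfold)
qed

lemma eq_reduced_mask:
  assumes "causal C \<sigma> \<Omega> \<Lambda>" and "identifiable C \<sigma> \<Omega> \<Lambda>" and "0 < \<sigma>"
    and L: "\<mu> \<in> Lip C \<sigma> \<Omega>" and "x \<in> \<Omega>" and t: "t \<in> {0..1}"
  shows "\<Lambda> \<mu> x t = reduced \<Lambda> (mask \<mu> t) x"
proof -
  define t' where "t' = e_end (tmarg (mask \<mu> t))"
  have fin: "finite_measure \<mu>" using LipD(2)[OF L] by (simp add: prob_space_def)
  have "0 \<le> t" using t by simp
  note end_time = mask_e_end_tmarg_mask[OF fin LipD(3)[OF L] this
      Lip_zero_slice_pos[OF L \<open>0 < \<sigma>\<close>], folded t'_def]
  have "t' \<in> {0..1}" using end_time(1,2) t by auto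
  have "\<Lambda> \<mu> x t = \<Lambda> (mask \<mu> t) x t" using assms by (simp add: causal_def)
  also have "\<dots> = \<Lambda> (mask \<mu> t') x t'"
    using assms \<open>t' \<in> {0..1}\<close> end_time(3) unfolding identifiable_def by metis
  also have "\<dots> = reduced \<Lambda> (mask \<mu> t) x"
    using end_time(3) by (simp add: reduced_def t'_def)
  finally show ?thesis .
qed

theorem lemma4p7:
  fixes \<Omega> :: "'a::euclidean_space set" and C \<sigma> :: real
    and \<Lambda> :: "('a \<times> real) measure \<Rightarrow> 'a \<Rightarrow> real \<Rightarrow> 'b::euclidean_space"
  assumes "compact \<Omega>" and "C > 0" and "0 < \<sigma>" and "\<sigma> < 1"
    and "causal C \<sigma> \<Omega> \<Lambda>" and "identifiable C \<sigma> \<Omega> \<Lambda>"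
  shows "(\<forall>\<mu>\<in>Lip C \<sigma> \<Omega>. \<forall>x\<in>\<Omega>. \<forall>t\<in>{0..1}. \<Lambda> \<mu> x t = reduced \<Lambda> (mask \<mu> t) x)
    \<and> (continuous_map
          (subtopology (prod_topology (weak_star \<Omega>) euclidean) (Lip C \<sigma> \<Omega> \<times> (\<Omega> \<times> {0..1})))
          euclidean (\<lambda>(\<mu>, (x, t)). \<Lambda> \<mu> x t)
       \<longrightarrow> continuous_map
          (subtopology (prod_topology (weak_star \<Omega>) euclidean) (Xset C \<sigma> \<Omega>))
          euclidean (\<lambda>(\<nu>, x). reduced \<Lambda> \<nu> x))"
proof (intro conjI impI)
  show reduced: "\<forall>\<mu>\<in>Lip C \<sigma> \<Omega>. \<forall>x\<in>\<Omega>. \<forall>t\<in>{0..1}. \<Lambda> \<mu> x t = reduced \<Lambda> (mask \<mu> t) x"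
    using eq_reduced_mask[OF assms(5,6,3)] by blast
  assume "continuous_map
      (subtopology (prod_topology (weak_star \<Omega>) euclidean) (Lip C \<sigma> \<Omega> \<times> (\<Omega> \<times> {0..1})))
      euclidean (\<lambda>(\<mu>, (x, t)). \<Lambda> \<mu> x t)"
  from continuous_map_fix_last[OF this _ Xset_subset_Lip[OF assms(3)], of 1]
  have cont_at_1: "continuous_map (subtopology (prod_topology (weak_star \<Omega>) euclidean) (Xset C \<sigma> \<Omega>))
      euclidean (\<lambda>(\<nu>, x). \<Lambda> \<nu> x 1)"
    by (simp add: case_prod_unfold)
  have at_1: "\<Lambda> \<nu> x 1 = reduced \<Lambda> \<nu> x" if "(\<nu>, x) \<in> Xset C \<sigma> \<Omega>" for \<nu> x
  proof -
    have "\<nu> \<in> Lip C \<sigma> \<Omega>" "x \<in> \<Omega>" using Xset_subset_Lip[OF assms(3)] that by auto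
    then show ?thesis using reduced mask_one[OF LipD(1)[OF \<open>\<nu> \<in> Lip C \<sigma> \<Omega>\<close>]] by auto
  qed
  show "continuous_map (subtopology (prod_topology (weak_star \<Omega>) euclidean) (Xset C \<sigma> \<Omega>))
      euclidean (\<lambda>(\<nu>, x). reduced \<Lambda> \<nu> x)"
    using cont_at_1 by (rule continuous_map_eq) (auto simp: at_1)
qed

end
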